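(* In the setting described in the context, let $\overline\alpha>0$ be such that $z_{1,\alpha}\ge0$ on $(0,R)$ for every $\alpha\in[0,\overline\alpha]$. Then for every $\alpha\in[0,\overline\alpha]$ and every integer $k\ge1$, $z_{k,\alpha}\le z_{1,\alpha}$ on $(0,R)$, and consequently $\omega_{k,\alpha}\ge\omega_{1,\alpha}$.
   Context: Let $n=2$, $\Omega=\mathbb B(0,R)$, $0<m_0<\kappa$, $r_0^*\in(0,R)$ with $\kappa|\mathbb B(0,r_0^* )|=m_0|\Omega|$, $m_0^*=\kappa\mathds 1_{\mathbb B(0,r_0^* )}$ and $\sigma_\alpha=1+\alpha m_0^*$. Let $\lambda_{0,\alpha}$ be the principal Dirichlet eigenvalue of $u\mapsto-\nabla\cdot(\sigma_\alpha\nabla u)-m_0^*u$ on $\Omega$ and $u_{0,\alpha}$ the nonnegative $L^2$-normalized eigenfunction, which is radial; we write $u_{0,\alpha}(r)$ for its profile. For $f$ defined near $r_0^*$, $f|_{int}(r_0^* )$, $f|_{ext}(r_0^* )$ denote the one-sided limits from $r<r_0^*$ and $r>r_0^*$, and $[\![f]\!]=f|_{ext}-f|_{int}$. For $k\ge1$, $z_{k,\alpha}:[0,R]\to\mathbb{R}$ is the solution of $-\sigma_\alpha z''-\frac{\sigma_\alpha}{r}z'=(\lambda_{0,\alpha}-\frac{k^2}{r^2})z+m_0^*z$ on $(0,r_0^* )\cup(r_0^*,R)$, with $[\![\sigma_\alpha z']\!](r_0^* )=-\kappa u_{0,\alpha}(r_0^* )$, $[\![z]\!](r_0^* )=-[\![\partial_ru_{0,\alpha}]\!](r_0^*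 )$, $z(0)=0$, $z(R)=0$. Define $\omega_{k,\alpha}=\frac{r_0^*\kappa u_{0,\alpha}(r_0^* )}{2}\big(-\partial_ru_{0,\alpha}|_{int}(r_0^* )-z_{k,\alpha}|_{int}(r_0^* )\big)$. *)

theory Defs
  imports "HOL-Analysis.Analysis"
begin

text \<open>Radial setting, n = 2, Omega = B(0,R), B(0,r0) the inner disk.
  All objects are written in the radial variable r.\<close>

definition sigma :: "real \<Rightarrow> real \<Rightarrow> real \<Rightarrow> real \<Rightarrow> real" where
  "sigma \<kappa> r0 \<alpha> r = (if r < r0 then 1 + \<alpha> * \<kappa> else 1)"

definition mstar :: "real \<Rightarrow> real \<Rightarrow> real \<Rightarrow> real" where
  "mstar \<kappa> r0 r = (if r < r0 then \<kappa> else 0)"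

definition lim_int :: "(real \<Rightarrow> real) \<Rightarrow> real \<Rightarrow> real" where
  "lim_int f x = Lim (at_left x) f"

definition lim_ext :: "(real \<Rightarrow> real) \<Rightarrow> real \<Rightarrow> real" where
  "lim_ext f x = Lim (at_right x) f"

definition has_one_sided_limits :: "(real \<Rightarrow> real) \<Rightarrow> real \<Rightarrow> bool" where
  "has_one_sided_limits f x \<longleftrightarrow>
     (\<exists>l. (f \<longlongrightarrow> l) (at_left x)) \<and> (\<exists>l. (f \<longlongrightarrow> l) (at_right x))"

definition radial_eq ::
  "real \<Rightarrow> real \<Rightarrow> real \<Rightarrow> real \<Rightarrow> real \<Rightarrow> (real \<Rightarrow> real) \<Rightarrow> real \<Rightarrow> bool" where
  "radial_eq \<kappa> r0 \<alpha> lam c f r \<longleftrightarrow>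
     (f has_real_derivative deriv f r) (at r) \<and>
     (deriv f has_real_derivative deriv (deriv f) r) (at r) \<and>
     - sigma \<kappa> r0 \<alpha> r * deriv (deriv f) r - sigma \<kappa> r0 \<alpha> r * deriv f r / r
       = (lam - c / r\<^sup>2) * f r + mstar \<kappa> r0 r * f r"

text \<open>(lam, u) is the principal Dirichlet eigenpair of
  u \<mapsto> -div(sigma_alpha grad u) - m0* u on B(0,R), u the nonnegative
  L2-normalized eigenfunction, written through its radial profile.
  Principality is encoded by the nonnegativity of the (nontrivial) eigenfunction.\<close>
definition principal_radial_eigenpair ::
  "real \<Rightarrow> real \<Rightarrow> real \<Rightarrow> real \<Rightarrow> real \<Rightarrow> (real \<Rightarrow> real) \<Rightarrow> bool" where
  "principal_radial_eigenpair \<kappa> r0 R \<alpha> lam u \<longleftrightarrow>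
     continuous_on {0..R} u \<and>
     (\<forall>r \<in> {0<..<r0} \<union> {r0<..<R}. radial_eq \<kappa> r0 \<alpha> lam 0 u r) \<and>
     (u has_real_derivative 0) (at 0 within {0..R}) \<and>
     has_one_sided_limits (deriv u) r0 \<and>
     (1 + \<alpha> * \<kappa>) * lim_int (deriv u) r0 = lim_ext (deriv u) r0 \<and>
     u R = 0 \<and>
     (\<forall>r \<in> {0..R}. 0 \<le> u r) \<and>
     2 * pi * integral {0..R} (\<lambda>r. r * (u r)\<^sup>2) = 1"

definition z_problem ::
  "real \<Rightarrow> real \<Rightarrow> real \<Rightarrow> real \<Rightarrow> real \<Rightarrow> (real \<Rightarrow> real) \<Rightarrow> nat \<Rightarrow> (real \<Rightarrow> real) \<Rightarrow> bool" where
  "z_problem \<kappa> r0 R \<alpha> lam u k z \<longleftrightarrow>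
     (\<forall>r \<in> {0<..<r0} \<union> {r0<..<R}. radial_eq \<kappa> r0 \<alpha> lam (real k ^ 2) z r) \<and>
     has_one_sided_limits z r0 \<and>
     has_one_sided_limits (deriv z) r0 \<and>
     lim_ext (deriv z) r0 - (1 + \<alpha> * \<kappa>) * lim_int (deriv z) r0 = - \<kappa> * u r0 \<and>
     lim_ext z r0 - lim_int z r0 = - (lim_ext (deriv u) r0 - lim_int (deriv u) r0) \<and>
     z 0 = 0 \<and> (z \<longlongrightarrow> 0) (at_right 0) \<and>
     z R = 0 \<and> (z \<longlongrightarrow> 0) (at_left R)"

definition omega :: "real \<Rightarrow> real \<Rightarrow> (real \<Rightarrow> real) \<Rightarrow> (real \<Rightarrow> real) \<Rightarrow> real" where
  "omega \<kappa> r0 u z = r0 * \<kappa> * u r0 / 2 * (- lim_int (deriv u) r0 - lim_int z r0)"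

end

theory Submission
  imports Defs
begin

(* Let w = z_j - z_k with j <= k and z_j >= 0; the transmission conditions make w continuous
   across r0.  The Wronskian W = r sigma (u w' - w u') with the eigenfunction u is continuous too,
   W' = u (j^2 z_j - k^2 z_k) / r is negative wherever w < 0, and (w/u)' = W / (r sigma u^2).
   If w(r1) < 0, W decreases strictly on the maximal interval (a, b) around r1 where w < 0.
   So either W > W(r1) > 0 on (a, r1), or W < 0 on (r1, b) (impossible for b = R, where
   W -> 0); then w/u is monotone between r1 and an endpoint where w >= 0, in the wrong direction.
   This needs u > 0 on [0, R), which follows from uniqueness for the order-zero Bessel equation
   satisfied by u on each phase: an energy estimate away from 0, a flux estimate at 0. *)

section \<open>Elementary real analysis\<close>

lemma DERIV_neg_imp_decreasing_open_except:
  fixes f f' :: "real \<Rightarrow> real"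
  assumes "a < b" and "continuous_on {a..b} f"
    and "\<And>x. a < x \<Longrightarrow> x < b \<Longrightarrow> x \<noteq> p \<Longrightarrow> (f has_real_derivative f' x) (at x) \<and> f' x < 0"
  shows "f b < f a"
proof -
  have decr: "f y < f x" if "a \<le> x" "x < y" "y \<le> b" "p \<notin> {x<..<y}" for x y
    by (rule DERIV_neg_imp_decreasing_open[OF \<open>x < y\<close>])
      (use that assms in \<open>force intro: continuous_on_subset\<close>)+
  show ?thesis
  proof (cases "a < p \<and> p < b")
    case True
    then show ?thesis using decr[of a p] decr[of p b] by fastforce
  qed (use decr[of a b] assms in auto)
qed

lemma DERIV_pos_imp_increasing_open_except:
  fixes f f' :: "real \<Rightarrow> real"
  assumes "a < b" and "continuous_on {a..b} f"
    and "\<And>x. a < x \<Longrightarrow> x < b \<Longrightarrow> x \<noteq> p \<Longrightarrow> (f has_real_derivative f' x) (at x) \<and> f' x > 0"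
  shows "f a < f b"
  using DERIV_neg_imp_decreasing_open_except[of a b "\<lambda>x. - f x" p "\<lambda>x. - f' x"] assms
  by (auto intro: continuous_on_minus DERIV_minus)

lemma abs_diff_le_of_bounded_deriv:
  fixes f f' :: "real \<Rightarrow> real"
  assumes "a \<le> b" and "continuous_on {a..b} f"
    and "\<And>x. a < x \<Longrightarrow> x < b \<Longrightarrow> (f has_real_derivative f' x) (at x) \<and> \<bar>f' x\<bar> \<le> D"
  shows "\<bar>f b - f a\<bar> \<le> D * (b - a)"
proof (cases "a = b")
  case False
  then obtain x l where "a < x" "x < b" "(f has_real_derivative l) (at x)" "f b - f a = (b - a) * l"
    using MVT[of a b f] assms by (fastforce simp: real_differentiable_def)
  with assms(3)[of x] DERIV_unique show ?thesis
    by (fastforce simp: abs_mult mult.commute intro: mult_left_mono)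
qed (use assms in simp)

lemma exists_abs_mult_deriv_le_abs_diff:
  fixes f :: "real \<Rightarrow> real"
  assumes "0 < s" and "continuous_on {0..s} f"
    and "\<And>x. 0 < x \<Longrightarrow> x < s \<Longrightarrow> (f has_real_derivative deriv f x) (at x)"
  shows "\<exists>\<xi>\<in>{0<..<s}. \<bar>\<xi> * deriv f \<xi>\<bar> \<le> \<bar>f s - f 0\<bar>"
proof -
  obtain l \<xi> where \<xi>: "0 < \<xi>" "\<xi> < s" "(f has_real_derivative l) (at \<xi>)" "f s - f 0 = (s - 0) * l"
    using MVT[OF \<open>0 < s\<close> assms(2)] assms(3) by (fastforce simp: real_differentiable_def)
  then have "l = deriv f \<xi>"
    using assms(3) by (auto intro: DERIV_unique)
  with \<xi> show ?thesis
    by (auto simp: abs_mult intro!: bexI[of _ \<xi>] mult_right_mono)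
qed

lemma deriv_limit_at_left_nonpos_if_local_min:
  fixes f :: "real \<Rightarrow> real"
  assumes lim: "(deriv f \<longlongrightarrow> l) (at_left x)" and cont: "(f \<longlongrightarrow> f x) (at_left x)"
    and ev: "\<forall>\<^sub>F y in at_left x. (f has_real_derivative deriv f y) (at y) \<and> f x \<le> f y"
  shows "l \<le> 0"
proof (rule ccontr)
  assume "\<not> l \<le> 0"
  then have "\<forall>\<^sub>F y in at_left x. 0 < deriv f y"
    using order_tendstoD(1)[OF lim, of 0] by simp
  with ev have "\<forall>\<^sub>F y in at_left x. 0 < deriv f y \<and> (f has_real_derivative deriv f y) (at y) \<and> f x \<le> f y"
    by eventually_elim auto
  then obtain b where "b < x" and b: "\<And>y. b < y \<Longrightarrow> y < x \<Longrightarrow>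
      0 < deriv f y \<and> (f has_real_derivative deriv f y) (at y) \<and> f x \<le> f y"
    unfolding eventually_at_left_field by blast
  define a where "a = (b + x) / 2"
  have a: "b < a" "a < x"
    using \<open>b < x\<close> by (auto simp: a_def)
  have "f a < f x"
  proof (rule DERIV_pos_imp_increasing_open[OF \<open>a < x\<close>])
    have "isCont f y" if "b < y" "y < x" for y
      using b[OF that] by (auto intro: DERIV_isCont)
    with a cont show "continuous_on {a..x} f"
      by (intro continuous_on_IccI) (auto simp: isCont_def filterlim_at_split)
  next
    fix y assume "a < y" "y < x"
    with a b[of y] show "\<exists>l. (f has_real_derivative l) (at y) \<and> 0 < l"
      by auto
  qed
  with b[of a] a show False
    by auto
qed

lemma deriv_limit_at_right_nonneg_if_local_min:
  fixes f :: "real \<Rightarrow> real"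
  assumes lim: "(deriv f \<longlongrightarrow> l) (at_right x)" and cont: "(f \<longlongrightarrow> f x) (at_right x)"
    and ev: "\<forall>\<^sub>F y in at_right x. (f has_real_derivative deriv f y) (at y) \<and> f x \<le> f y"
  shows "0 \<le> l"
proof (rule ccontr)
  assume "\<not> 0 \<le> l"
  then have "\<forall>\<^sub>F y in at_right x. deriv f y < 0"
    using order_tendstoD(2)[OF lim, of 0] by simp
  with ev have "\<forall>\<^sub>F y in at_right x. deriv f y < 0 \<and> (f has_real_derivative deriv f y) (at y) \<and> f x \<le> f y"
    by eventually_elim auto
  then obtain b where "x < b" and b: "\<And>y. x < y \<Longrightarrow> y < b \<Longrightarrow>
      deriv f y < 0 \<and> (f has_real_derivative deriv f y) (at y) \<and> f x \<le> f y"
    unfolding eventually_at_right_field by blast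
  define a where "a = (x + b) / 2"
  have a: "x < a" "a < b"
    using \<open>x < b\<close> by (auto simp: a_def)
  have "f a < f x"
  proof (rule DERIV_neg_imp_decreasing_open[OF \<open>x < a\<close>])
    have "isCont f y" if "x < y" "y < b" for y
      using b[OF that] by (auto intro: DERIV_isCont)
    with a cont show "continuous_on {x..a} f"
      by (intro continuous_on_IccI) (auto simp: isCont_def filterlim_at_split)
  next
    fix y assume "x < y" "y < a"
    with a b[of y] show "\<exists>l. (f has_real_derivative l) (at y) \<and> l < 0"
      by auto
  qed
  with b[of a] a show False
    by auto
qed

lemma continuous_on_Icc_last_nonneg:
  fixes f :: "real \<Rightarrow> real"
  assumes "a \<le> b" "continuous_on {a..b} f" "0 \<le> f a" "f b < 0"
  obtains c where "a \<le> c" "c < b" "0 \<le> f c" "\<And>t. c < t \<Longrightarrow> t \<le> b \<Longrightarrow> f t < 0"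
proof -
  define S where "S = {a..b} \<inter> f -` {0..}"
  have "closed S"
    unfolding S_def by (rule continuous_closed_preimage[OF assms(2)]) auto
  moreover have "a \<in> S" "bdd_above S"
    using assms by (auto simp: S_def intro: bdd_aboveI[of _ b])
  ultimately have c: "Sup S \<in> S" and upper: "\<And>t. t \<in> S \<Longrightarrow> t \<le> Sup S"
    by (auto intro: closed_contains_Sup cSup_upper)
  show ?thesis
  proof (rule that[of "Sup S"])
    fix t assume "Sup S < t" "t \<le> b"
    with c upper[of t] show "f t < 0" by (force simp: S_def)
  qed (use c assms in \<open>force simp: S_def le_less\<close>)+
qed

lemma continuous_on_Icc_first_nonneg:
  fixes f :: "real \<Rightarrow> real"
  assumes "a \<le> b" "continuous_on {a..b} f" "f a < 0" "0 \<le> f b"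
  obtains c where "a < c" "c \<le> b" "0 \<le> f c" "\<And>t. a \<le> t \<Longrightarrow> t < c \<Longrightarrow> f t < 0"
proof -
  define S where "S = {a..b} \<inter> f -` {0..}"
  have "closed S"
    unfolding S_def by (rule continuous_closed_preimage[OF assms(2)]) auto
  moreover have "b \<in> S" "bdd_below S"
    using assms by (auto simp: S_def intro: bdd_belowI[of _ a])
  ultimately have c: "Inf S \<in> S" and lower: "\<And>t. t \<in> S \<Longrightarrow> Inf S \<le> t"
    by (auto intro: closed_contains_Inf cInf_lower)
  show ?thesis
  proof (rule that[of "Inf S"])
    fix t assume "a \<le> t" "t < Inf S"
    with c lower[of t] show "f t < 0" by (force simp: S_def)
  qed (use c assms in \<open>force simp: S_def le_less\<close>)+
qed

lemma DERIV_abs_le_imp_exp_bounds: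
  fixes g g' :: "real \<Rightarrow> real"
  assumes "s \<le> t"
    and "\<And>x. s \<le> x \<Longrightarrow> x \<le> t \<Longrightarrow> (g has_real_derivative g' x) (at x) \<and> \<bar>g' x\<bar> \<le> K * g x"
  shows "g t \<le> g s * exp (K * (t - s))" and "g s \<le> g t * exp (K * (t - s))"
proof -
  have "g t * exp (- K * t) \<le> g s * exp (- K * s)"
  proof (rule DERIV_nonpos_imp_nonincreasing[OF \<open>s \<le> t\<close>])
    fix x assume "s \<le> x" "x \<le> t"
    with assms(2)[of x] show "\<exists>y. ((\<lambda>x. g x * exp (- K * x)) has_real_derivative y) (at x) \<and> y \<le> 0"
      by (intro exI[of _ "(g' x - K * g x) * exp (- K * x)"] conjI mult_nonpos_nonneg)
        (auto intro!: derivative_eq_intros simp: algebra_simps)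
  qed
  then show "g t \<le> g s * exp (K * (t - s))"
    by (simp add: exp_diff exp_minus field_simps)
  have "g s * exp (K * s) \<le> g t * exp (K * t)"
  proof (rule DERIV_nonneg_imp_nondecreasing[OF \<open>s \<le> t\<close>])
    fix x assume "s \<le> x" "x \<le> t"
    with assms(2)[of x] show "\<exists>y. ((\<lambda>x. g x * exp (K * x)) has_real_derivative y) (at x) \<and> y \<ge> 0"
      by (intro exI[of _ "(g' x + K * g x) * exp (K * x)"] conjI mult_nonneg_nonneg)
        (auto intro!: derivative_eq_intros simp: algebra_simps)
  qed
  then show "g s \<le> g t * exp (K * (t - s))"
    by (simp add: exp_diff field_simps)
qed

section \<open>The radial Bessel equation of order zero\<close>

text \<open>f'' + f'/r + \<beta> f = 0, Bessel's equation of order zero in the variable sqrt \<beta> * r.\<close>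
definition bessel0_ode_on :: "real \<Rightarrow> (real \<Rightarrow> real) \<Rightarrow> real set \<Rightarrow> bool" where
  "bessel0_ode_on \<beta> f S \<longleftrightarrow> (\<forall>r\<in>S. (f has_real_derivative deriv f r) (at r) \<and>
     (deriv f has_real_derivative deriv (deriv f) r) (at r) \<and>
     deriv (deriv f) r = - deriv f r / r - \<beta> * f r)"

lemma bessel0_ode_onD:
  assumes "bessel0_ode_on \<beta> f S" and "r \<in> S"
  shows "(f has_real_derivative deriv f r) (at r)"
    and "(deriv f has_real_derivative deriv (deriv f) r) (at r)"
    and "deriv (deriv f) r = - deriv f r / r - \<beta> * f r"
  using assms unfolding bessel0_ode_on_def by blast+

lemma bessel0_ode_on_subset: "bessel0_ode_on \<beta> f T \<Longrightarrow> S \<subseteq> T \<Longrightarrow> bessel0_ode_on \<beta> f S"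
  unfolding bessel0_ode_on_def by blast

lemma bessel0_energy_deriv_bound:
  assumes "bessel0_ode_on \<beta> f {r}" "0 < A" "A \<le> r"
  shows "((\<lambda>x. (f x)\<^sup>2 + (deriv f x)\<^sup>2) has_real_derivative
            2 * f r * deriv f r + 2 * deriv f r * deriv (deriv f) r) (at r)"
    and "\<bar>2 * f r * deriv f r + 2 * deriv f r * deriv (deriv f) r\<bar>
            \<le> (1 + \<bar>\<beta>\<bar> + 2 / A) * ((f r)\<^sup>2 + (deriv f r)\<^sup>2)"
proof -
  note ode = bessel0_ode_onD[OF assms(1) singletonI]
  show "((\<lambda>x. (f x)\<^sup>2 + (deriv f x)\<^sup>2) has_real_derivative
            2 * f r * deriv f r + 2 * deriv f r * deriv (deriv f) r) (at r)"
    using ode by (auto intro!: derivative_eq_intros)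
  define x y where "x = f r" and "y = deriv f r"
  have r: "0 < r" using assms by simp
  have amgm: "2 * \<bar>x * y\<bar> \<le> x\<^sup>2 + y\<^sup>2"
    using sum_squares_bound[of "\<bar>x\<bar>" "\<bar>y\<bar>"] by (simp add: abs_mult power2_eq_square)
  have "y\<^sup>2 / r \<le> y\<^sup>2 / A"
    using assms by (intro divide_left_mono) auto
  also have "\<dots> \<le> (x\<^sup>2 + y\<^sup>2) / A"
    using assms by (intro divide_right_mono) auto
  finally have flux: "y\<^sup>2 / r \<le> (x\<^sup>2 + y\<^sup>2) / A" .
  have ddf: "deriv (deriv f) r = - y / r - \<beta> * x"
    using ode(3) by (simp add: x_def y_def)
  have "2 * x * y + 2 * y * deriv (deriv f) r = (1 - \<beta>) * (2 * x * y) - 2 * (y\<^sup>2 / r)"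
    unfolding ddf by (simp add: algebra_simps power2_eq_square)
  also have "\<bar>\<dots>\<bar> \<le> (1 + \<bar>\<beta>\<bar>) * (2 * \<bar>x * y\<bar>) + 2 * (y\<^sup>2 / r)"
    using r by (auto simp: abs_mult intro!: order.trans[OF abs_triangle_ineq4] mult_right_mono)
  also have "\<dots> \<le> (1 + \<bar>\<beta>\<bar>) * (x\<^sup>2 + y\<^sup>2) + 2 * ((x\<^sup>2 + y\<^sup>2) / A)"
    using amgm flux by (intro add_mono mult_left_mono) auto
  finally show "\<bar>2 * f r * deriv f r + 2 * deriv f r * deriv (deriv f) r\<bar>
            \<le> (1 + \<bar>\<beta>\<bar> + 2 / A) * ((f r)\<^sup>2 + (deriv f r)\<^sup>2)"
    by (simp add: x_def y_def algebra_simps add_divide_distrib)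
qed

lemma bessel0_energy_estimate:
  assumes ode: "bessel0_ode_on \<beta> f {A<..<B}" and "0 < A" and "s \<in> {A<..<B}" "t \<in> {A<..<B}"
  shows "(f t)\<^sup>2 + (deriv f t)\<^sup>2 \<le> ((f s)\<^sup>2 + (deriv f s)\<^sup>2) * exp ((1 + \<bar>\<beta>\<bar> + 2 / A) * B)"
proof -
  define K where "K = 1 + \<bar>\<beta>\<bar> + 2 / A"
  define E where "E x = (f x)\<^sup>2 + (deriv f x)\<^sup>2" for x
  have "E b \<le> E a * exp (K * (b - a)) \<and> E a \<le> E b * exp (K * (b - a))"
    if "a \<in> {A<..<B}" "b \<in> {A<..<B}" "a \<le> b" for a b
  proof -
    have "bessel0_ode_on \<beta> f {x}" if "a \<le> x" "x \<le> b" for x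
      using \<open>a \<in> {A<..<B}\<close> \<open>b \<in> {A<..<B}\<close> that by (intro bessel0_ode_on_subset[OF ode]) auto
    with \<open>0 < A\<close> \<open>a \<in> {A<..<B}\<close> show ?thesis
      unfolding E_def K_def
      by (intro conjI DERIV_abs_le_imp_exp_bounds[OF \<open>a \<le> b\<close>, where
            g' = "\<lambda>x. 2 * f x * deriv f x + 2 * deriv f x * deriv (deriv f) x"]
          bessel0_energy_deriv_bound) auto
  qed
  then have "E t \<le> E s * exp (K * \<bar>t - s\<bar>)"
    using assms by (cases "s \<le> t") auto
  also have "\<dots> \<le> E s * exp (K * B)"
    using assms by (intro mult_left_mono) (auto simp: E_def K_def intro!: mult_left_mono)
  finally show ?thesis unfolding E_def K_def .
qed

lemma bessel0_vanishes_if_energy_tends_to_zero: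
  assumes ode: "bessel0_ode_on \<beta> f {A<..<B}" and "0 < A" and "t \<in> {A<..<B}"
    and "F \<noteq> bot" and "\<forall>\<^sub>F s in F. s \<in> {A<..<B}"
    and "((\<lambda>s. (f s)\<^sup>2 + (deriv f s)\<^sup>2) \<longlongrightarrow> 0) F"
  shows "f t = 0"
proof -
  have "(f t)\<^sup>2 + (deriv f t)\<^sup>2 \<le> 0 * exp ((1 + \<bar>\<beta>\<bar> + 2 / A) * B)"
  proof (rule tendsto_le[OF \<open>F \<noteq> bot\<close> tendsto_mult_right[OF assms(6)] tendsto_const])
    show "\<forall>\<^sub>F s in F. (f t)\<^sup>2 + (deriv f t)\<^sup>2 \<le> ((f s)\<^sup>2 + (deriv f s)\<^sup>2) * exp ((1 + \<bar>\<beta>\<bar> + 2 / A) * B)"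
      using assms(5) by eventually_elim (use bessel0_energy_estimate[OF ode \<open>0 < A\<close> _ \<open>t \<in> _\<close>] in blast)
  qed
  then show ?thesis
    by (simp add: sum_power2_le_zero_iff)
qed

lemma bessel0_vanishes_at_left_end:
  assumes "bessel0_ode_on \<beta> f {A<..<B}" and "0 < A" and "t \<in> {A<..<B}"
    and "(f \<longlongrightarrow> 0) (at_right A)" and "(deriv f \<longlongrightarrow> 0) (at_right A)"
  shows "f t = 0"
  by (rule bessel0_vanishes_if_energy_tends_to_zero[OF assms(1-3), where F = "at_right A"])
    (use assms eventually_at_right_real[of A B] in \<open>auto intro: tendsto_eq_intros\<close>)

lemma bessel0_vanishes_at_right_end:
  assumes ode: "bessel0_ode_on \<beta> f {A<..<B}" and "0 \<le> A" and "t \<in> {A<..<B}"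
    and "(f \<longlongrightarrow> 0) (at_left B)" and "(deriv f \<longlongrightarrow> 0) (at_left B)"
  shows "f t = 0"
proof -
  have "bessel0_ode_on \<beta> f {(A + t) / 2<..<B}"
    by (rule bessel0_ode_on_subset[OF ode]) (use assms in auto)
  then show ?thesis
    by (rule bessel0_vanishes_if_energy_tends_to_zero[where F = "at_left B"])
      (use assms eventually_at_left_real[of "(A + t) / 2" B] in \<open>auto intro: tendsto_eq_intros\<close>)
qed

lemma bessel0_vanishes_from_double_zero:
  assumes ode: "bessel0_ode_on \<beta> f {A<..<B}" and "0 \<le> A"
    and "t0 \<in> {A<..<B}" "f t0 = 0" "deriv f t0 = 0" and "t \<in> {A<..<B}"
  shows "f t = 0"
proof -
  define A' where "A' = (A + min t t0) / 2"
  have "bessel0_ode_on \<beta> f {A'<..<B}"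
    by (rule bessel0_ode_on_subset[OF ode]) (use assms in \<open>auto simp: A'_def\<close>)
  from bessel0_energy_estimate[OF this, of t0 t] assms
  have "(f t)\<^sup>2 + (deriv f t)\<^sup>2 \<le> 0"
    by (auto simp: A'_def)
  then show ?thesis
    by (simp add: sum_power2_le_zero_iff)
qed

lemma bessel0_flux_deriv:
  assumes "bessel0_ode_on \<beta> f {x}" and "0 < x"
  shows "((\<lambda>r. r * deriv f r) has_real_derivative - \<beta> * x * f x) (at x)"
  using bessel0_ode_onD[OF assms(1) singletonI] \<open>0 < x\<close>
  by (auto intro!: derivative_eq_intros simp: field_simps)

lemma bessel0_deriv_bound_near_origin:
  assumes ode: "bessel0_ode_on \<beta> f {0<..\<rho>}" and cont: "continuous_on {0..\<rho>} f"
    and bound: "\<And>x. 0 \<le> x \<Longrightarrow> x \<le> \<rho> \<Longrightarrow> \<bar>f x\<bar> \<le> M" and r: "0 < r" "r \<le> \<rho>"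
  shows "\<bar>deriv f r\<bar> \<le> \<bar>\<beta>\<bar> * \<rho> * M"
proof -
  define p where "p x = x * deriv f x" for x
  have p_deriv: "(p has_real_derivative - \<beta> * x * f x) (at x)" if "0 < x" "x \<le> \<rho>" for x
    unfolding p_def using that by (intro bessel0_flux_deriv bessel0_ode_on_subset[OF ode]) auto
  have p_lipschitz: "\<bar>p r - p s\<bar> \<le> \<bar>\<beta>\<bar> * \<rho> * M * (r - s)" if "0 < s" "s \<le> r" for s
  proof (rule abs_diff_le_of_bounded_deriv[OF \<open>s \<le> r\<close>])
    show "continuous_on {s..r} p"
      using r that by (intro continuous_at_imp_continuous_on ballI DERIV_isCont[OF p_deriv]) auto
    fix x assume "s < x" "x < r"
    with that r bound[of x] show "(p has_real_derivative - \<beta> * x * f x) (at x) \<and> \<bar>- \<beta> * x * f x\<bar> \<le> \<bar>\<beta>\<bar> * \<rho> * M"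
      by (intro conjI p_deriv) (auto simp: abs_mult intro!: mult_mono)
  qed
  have "\<bar>p r\<bar> \<le> \<bar>\<beta>\<bar> * \<rho> * M * r + \<bar>f s - f 0\<bar>" if s: "0 < s" "s < r" for s
  proof -
    have "\<exists>\<xi>\<in>{0<..<s}. \<bar>\<xi> * deriv f \<xi>\<bar> \<le> \<bar>f s - f 0\<bar>"
      using s r by (intro exists_abs_mult_deriv_le_abs_diff continuous_on_subset[OF cont]
          bessel0_ode_onD(1)[OF ode]) auto
    then obtain \<xi> where \<xi>: "0 < \<xi>" "\<xi> < s" and "\<bar>p \<xi>\<bar> \<le> \<bar>f s - f 0\<bar>"
      unfolding p_def by auto
    moreover have "\<bar>p r - p \<xi>\<bar> \<le> \<bar>\<beta>\<bar> * \<rho> * M * r"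
      using p_lipschitz[of \<xi>] mult_left_mono[of "r - \<xi>" r "\<bar>\<beta>\<bar> * \<rho> * M"] \<xi> s bound[of 0] r
      by force
    ultimately show ?thesis by linarith
  qed
  then have "\<forall>\<^sub>F s in at_right 0. \<bar>p r\<bar> \<le> \<bar>\<beta>\<bar> * \<rho> * M * r + \<bar>f s - f 0\<bar>"
    using eventually_at_right_real[of 0 r] r by (auto elim!: eventually_mono)
  moreover have "((\<lambda>s. \<bar>\<beta>\<bar> * \<rho> * M * r + \<bar>f s - f 0\<bar>) \<longlongrightarrow> \<bar>\<beta>\<bar> * \<rho> * M * r + \<bar>f 0 - f 0\<bar>) (at_right 0)"
    using r by (intro tendsto_intros continuous_on_Icc_at_rightD[OF cont]) auto
  ultimately have "\<bar>p r\<bar> \<le> \<bar>\<beta>\<bar> * \<rho> * M * r"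
    using tendsto_le[OF trivial_limit_at_right_real _ tendsto_const] by fastforce
  then show ?thesis
    using r by (simp add: p_def abs_mult algebra_simps)
qed

lemma bessel0_vanishes_near_origin:
  assumes ode: "bessel0_ode_on \<beta> f {0<..\<rho>}" and cont: "continuous_on {0..\<rho>} f"
    and "f 0 = 0" and "0 < \<rho>" and small: "\<bar>\<beta>\<bar> * \<rho> * \<rho> \<le> 1 / 2" and x: "x \<in> {0..\<rho>}"
  shows "f x = 0"
proof -
  obtain xm where xm: "xm \<in> {0..\<rho>}" and max: "\<And>x. x \<in> {0..\<rho>} \<Longrightarrow> \<bar>f x\<bar> \<le> \<bar>f xm\<bar>"
    using continuous_attains_sup[OF compact_Icc _ continuous_on_rabs[OF cont]] \<open>0 < \<rho>\<close> by force
  define M where "M = \<bar>f xm\<bar>"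
  have "\<bar>f x\<bar> \<le> M / 2" if "x \<in> {0..\<rho>}" for x
  proof -
    have "\<bar>f x - f 0\<bar> \<le> \<bar>\<beta>\<bar> * \<rho> * M * (x - 0)"
    proof (rule abs_diff_le_of_bounded_deriv)
      fix y assume "0 < y" "y < x"
      with that bessel0_ode_onD(1)[OF ode, of y] max
      show "(f has_real_derivative deriv f y) (at y) \<and> \<bar>deriv f y\<bar> \<le> \<bar>\<beta>\<bar> * \<rho> * M"
        by (auto simp: M_def intro!: bessel0_deriv_bound_near_origin[OF ode cont])
    qed (use that in \<open>auto intro: continuous_on_subset[OF cont]\<close>)
    also have "\<dots> \<le> \<bar>\<beta>\<bar> * \<rho> * M * \<rho>"
      using that by (intro mult_left_mono) (auto simp: M_def)
    also have "\<dots> = (\<bar>\<beta>\<bar> * \<rho> * \<rho>) * M"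
      by (simp add: algebra_simps)
    also have "\<dots> \<le> 1 / 2 * M"
      using small by (intro mult_right_mono) (auto simp: M_def)
    finally show ?thesis using \<open>f 0 = 0\<close> by simp
  qed
  with x xm max[of x] show ?thesis
    by (fastforce simp: M_def)
qed

lemma bessel0_vanishes_at_origin:
  assumes ode: "bessel0_ode_on \<beta> f {0<..<\<rho>}" and cont: "continuous_on {0..<\<rho>} f"
    and "f 0 = 0" and t: "t \<in> {0<..<\<rho>}"
  shows "f t = 0"
proof -
  define \<rho>1 where "\<rho>1 = min (\<rho> / 2) (1 / (2 * \<bar>\<beta>\<bar> + 1))"
  have \<rho>1: "0 < \<rho>1" "\<rho>1 < \<rho>"
    using t by (auto simp: \<rho>1_def)
  have "\<rho>1 * (2 * \<bar>\<beta>\<bar> + 1) \<le> 1"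
    by (simp add: \<rho>1_def min_def field_simps)
  then have "\<bar>\<beta>\<bar> * \<rho>1 \<le> 1 / 2" "\<rho>1 \<le> 1"
    using \<rho>1 mult_nonneg_nonneg[of "\<bar>\<beta>\<bar>" \<rho>1] by argo+
  then have "\<bar>\<beta>\<bar> * \<rho>1 * \<rho>1 \<le> 1 / 2"
    using mult_mono[of "\<bar>\<beta>\<bar> * \<rho>1" "1 / 2" \<rho>1 1] \<rho>1 by simp
  moreover have "bessel0_ode_on \<beta> f {0<..\<rho>1}" "continuous_on {0..\<rho>1} f"
    using \<rho>1 by (auto intro: bessel0_ode_on_subset[OF ode] continuous_on_subset[OF cont])
  ultimately have zero: "f x = 0" if "x \<in> {0..\<rho>1}" for x
    using bessel0_vanishes_near_origin \<open>f 0 = 0\<close> \<rho>1 that by blast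
  have "\<forall>\<^sub>F x in nhds (\<rho>1 / 2). f x = 0"
    using \<rho>1 by (intro eventually_nhds_in_open[of "{0<..<\<rho>1}", THEN eventually_mono]) (auto intro: zero)
  then have "(f has_real_derivative 0) (at (\<rho>1 / 2))"
    by (subst DERIV_cong_ev[OF refl _ refl, where g = "\<lambda>_. 0"]) auto
  then have "deriv f (\<rho>1 / 2) = 0"
    by (rule DERIV_imp_deriv)
  with \<rho>1 zero[of "\<rho>1 / 2"] show ?thesis
    by (intro bessel0_vanishes_from_double_zero[OF ode order_refl _ _ _ t]) auto
qed

lemma bessel0_nonneg_vanishes_if_zero:
  assumes ode: "bessel0_ode_on \<beta> f {A<..<B}" and "0 \<le> A"
    and nonneg: "\<And>x. A < x \<Longrightarrow> x < B \<Longrightarrow> 0 \<le> f x"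
    and t0: "t0 \<in> {A<..<B}" "f t0 = 0" and t: "t \<in> {A<..<B}"
  shows "f t = 0"
proof -
  have "\<forall>y. \<bar>t0 - y\<bar> < min (t0 - A) (B - t0) \<longrightarrow> f t0 \<le> f y"
    using t0 by (auto intro!: nonneg simp: abs_less_iff)
  with t0 have "deriv f t0 = 0"
    by (intro DERIV_local_min[OF bessel0_ode_onD(1)[OF ode], of t0 "min (t0 - A) (B - t0)"]) auto
  with t0 show ?thesis
    by (intro bessel0_vanishes_from_double_zero[OF ode \<open>0 \<le> A\<close> _ _ _ t]) auto
qed

section \<open>The radial transmission equation\<close>

lemma has_one_sided_limitsD:
  assumes "has_one_sided_limits f x"
  shows "(f \<longlongrightarrow> lim_int f x) (at_left x)" and "(f \<longlongrightarrow> lim_ext f x) (at_right x)"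
  using assms unfolding has_one_sided_limits_def lim_int_def lim_ext_def
  by (metis tendsto_Lim trivial_limit_at_left_real trivial_limit_at_right_real)+

lemma radial_eq_flux_form:
  assumes "radial_eq \<kappa> r0 \<alpha> lam c f r" and "0 < r"
  shows "sigma \<kappa> r0 \<alpha> r * (r * deriv (deriv f) r + deriv f r)
           = c * f r / r - (lam + mstar \<kappa> r0 r) * r * f r"
proof -
  have "sigma \<kappa> r0 \<alpha> r * (r * deriv (deriv f) r + deriv f r)
          = - r * (- sigma \<kappa> r0 \<alpha> r * deriv (deriv f) r - sigma \<kappa> r0 \<alpha> r * deriv f r / r)"
    using \<open>0 < r\<close> by (simp add: field_simps)
  also have "\<dots> = - r * ((lam - c / r\<^sup>2) * f r + mstar \<kappa> r0 r * f r)"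
    using assms(1) unfolding radial_eq_def by simp
  also have "\<dots> = c * f r / r - (lam + mstar \<kappa> r0 r) * r * f r"
    using \<open>0 < r\<close> by (simp add: field_simps power2_eq_square)
  finally show ?thesis .
qed

lemma radial_eq_outer_flux_form:
  assumes "radial_eq \<kappa> r0 \<alpha> lam c f r" and "r0 \<le> r" and "0 < r"
  shows "r * deriv (deriv f) r + deriv f r = (c / r - lam * r) * f r"
  using radial_eq_flux_form[OF assms(1,3)] assms(2,3)
  by (simp add: sigma_def mstar_def algebra_simps)

lemma radial_eq_imp_bessel0:
  assumes "\<And>r. r \<in> S \<Longrightarrow> radial_eq \<kappa> r0 \<alpha> lam 0 f r \<and> 0 < r"
    and "\<And>r. r \<in> S \<Longrightarrow> sigma \<kappa> r0 \<alpha> r = \<sigma> \<and> mstar \<kappa> r0 r = m" and "\<sigma> \<noteq> 0"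
  shows "bessel0_ode_on ((lam + m) / \<sigma>) f S"
  unfolding bessel0_ode_on_def
proof
  fix r assume "r \<in> S"
  with assms have rad: "radial_eq \<kappa> r0 \<alpha> lam 0 f r" and "0 < r"
    and coeffs: "sigma \<kappa> r0 \<alpha> r = \<sigma>" "mstar \<kappa> r0 r = m"
    by auto
  from radial_eq_flux_form[OF rad \<open>0 < r\<close>, unfolded coeffs] \<open>0 < r\<close> \<open>\<sigma> \<noteq> 0\<close>
  have "deriv (deriv f) r = - deriv f r / r - (lam + m) / \<sigma> * f r"
    by (simp add: field_simps)
  with rad show "(f has_real_derivative deriv f r) (at r) \<and>
      (deriv f has_real_derivative deriv (deriv f) r) (at r) \<and>
      deriv (deriv f) r = - deriv f r / r - (lam + m) / \<sigma> * f r"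
    unfolding radial_eq_def by blast
qed

lemma eventually_same_side:
  assumes "t \<noteq> r0"
  shows "\<forall>\<^sub>F x in nhds t. x \<noteq> r0 \<and> sigma \<kappa> r0 \<alpha> x = sigma \<kappa> r0 \<alpha> t"
proof (cases "t < r0")
  case True
  then have "\<forall>\<^sub>F x in nhds t. x \<in> {..<r0}"
    by (intro eventually_nhds_in_open) auto
  then show ?thesis
    by (rule eventually_mono) (use True in \<open>auto simp: sigma_def\<close>)
next
  case False
  with assms have "\<forall>\<^sub>F x in nhds t. x \<in> {r0<..}"
    by (intro eventually_nhds_in_open) auto
  then show ?thesis
    by (rule eventually_mono) (use False in \<open>auto simp: sigma_def\<close>)
qed

lemma deriv_bounded_if_flux_deriv_bounded:
  assumes "0 < a"
    and "\<And>r. a \<le> r \<Longrightarrow> r < b \<Longrightarrow> (f has_real_derivative deriv f r) (at r) \<and>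
           (deriv f has_real_derivative deriv (deriv f) r) (at r) \<and>
           \<bar>r * deriv (deriv f) r + deriv f r\<bar> \<le> D"
  shows "\<exists>B. \<forall>r\<in>{a..<b}. \<bar>deriv f r\<bar> \<le> B"
proof (intro exI ballI)
  fix r assume r: "r \<in> {a..<b}"
  have flux: "((\<lambda>x. x * deriv f x) has_real_derivative r * deriv (deriv f) r + deriv f r) (at r)"
    if "a \<le> r" "r < b" for r
    using assms(2)[OF that] by (auto intro!: derivative_eq_intros)
  have "\<bar>r * deriv f r - a * deriv f a\<bar> \<le> D * (r - a)"
  proof (rule abs_diff_le_of_bounded_deriv[where f' = "\<lambda>x. x * deriv (deriv f) x + deriv f x"])
    show "continuous_on {a..r} (\<lambda>x. x * deriv f x)"
      using r by (intro continuous_at_imp_continuous_on ballI DERIV_isCont[OF flux]) auto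
  qed (use r flux assms(2) in auto)
  also have "\<dots> \<le> \<bar>D\<bar> * b"
    using r \<open>0 < a\<close> by (intro mult_mono) auto
  finally have "\<bar>r * deriv f r\<bar> \<le> \<bar>a * deriv f a\<bar> + \<bar>D\<bar> * b"
    using abs_triangle_ineq2[of "r * deriv f r" "a * deriv f a"] by linarith
  then have "a * \<bar>deriv f r\<bar> \<le> \<bar>a * deriv f a\<bar> + \<bar>D\<bar> * b"
    using r \<open>0 < a\<close> mult_right_mono[of a r "\<bar>deriv f r\<bar>"] by (simp add: abs_mult)
  then show "\<bar>deriv f r\<bar> \<le> (\<bar>a * deriv f a\<bar> + \<bar>D\<bar> * b) / a"
    using \<open>0 < a\<close> by (simp add: field_simps)
qed

lemma radial_eq_deriv_bounded_at_left:
  assumes "0 \<le> r0" "r0 < R" and rad: "\<And>r. r0 < r \<Longrightarrow> r < R \<Longrightarrow> radial_eq \<kappa> r0 \<alpha> lam c f r"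
    and lim: "(f \<longlongrightarrow> 0) (at_left R)"
  shows "\<exists>B. \<forall>\<^sub>F r in at_left R. \<bar>deriv f r\<bar> \<le> B"
proof -
  have "\<forall>\<^sub>F r in at_left R. \<bar>f r\<bar> < 1"
    using order_tendstoD(2)[OF tendsto_rabs[OF lim], of 1] by simp
  then obtain b where "b < R" and b: "\<And>r. b < r \<Longrightarrow> r < R \<Longrightarrow> \<bar>f r\<bar> < 1"
    unfolding eventually_at_left_field by blast
  define a where "a = max ((b + R) / 2) ((r0 + R) / 2)"
  have a: "r0 < a" "a < R" "b < a" "0 < a"
    using \<open>b < R\<close> assms(1,2) by (auto simp: a_def max_def)
  have "\<exists>B. \<forall>r\<in>{a..<R}. \<bar>deriv f r\<bar> \<le> B"
  proof (rule deriv_bounded_if_flux_deriv_bounded[where D = "\<bar>c\<bar> / a + \<bar>lam\<bar> * R"])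
    fix r assume r: "a \<le> r" "r < R"
    with a have "radial_eq \<kappa> r0 \<alpha> lam c f r" "r0 \<le> r" "0 < r"
      by (auto intro: rad)
    note flux = radial_eq_outer_flux_form[OF this]
    have "\<bar>c / r\<bar> \<le> \<bar>c\<bar> / a" "\<bar>lam * r\<bar> \<le> \<bar>lam\<bar> * R"
      using r a by (auto simp: abs_mult abs_divide intro!: divide_left_mono mult_left_mono)
    then have "\<bar>c / r - lam * r\<bar> \<le> \<bar>c\<bar> / a + \<bar>lam\<bar> * R"
      using abs_triangle_ineq4[of "c / r" "lam * r"] by linarith
    moreover have "\<bar>f r\<bar> \<le> 1"
      using b[of r] r a by auto
    ultimately have "\<bar>c / r - lam * r\<bar> * \<bar>f r\<bar> \<le> (\<bar>c\<bar> / a + \<bar>lam\<bar> * R) * 1"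
      by (intro mult_mono) auto
    then have "\<bar>r * deriv (deriv f) r + deriv f r\<bar> \<le> \<bar>c\<bar> / a + \<bar>lam\<bar> * R"
      unfolding flux abs_mult by simp
    with \<open>radial_eq \<kappa> r0 \<alpha> lam c f r\<close> show "(f has_real_derivative deriv f r) (at r) \<and>
        (deriv f has_real_derivative deriv (deriv f) r) (at r) \<and>
        \<bar>r * deriv (deriv f) r + deriv f r\<bar> \<le> \<bar>c\<bar> / a + \<bar>lam\<bar> * R"
      unfolding radial_eq_def by blast
  qed (use a in auto)
  then obtain B where B: "\<forall>r\<in>{a..<R}. \<bar>deriv f r\<bar> \<le> B" ..
  have "\<forall>\<^sub>F r in at_left R. \<bar>deriv f r\<bar> \<le> B"
    using eventually_at_left_real[OF \<open>a < R\<close>] by (rule eventually_mono) (use B in auto)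
  then show ?thesis ..
qed

section \<open>Positivity of the principal eigenfunction\<close>

locale radial_principal_eigenfunction =
  fixes \<kappa> r0 R \<alpha> L :: real and U :: "real \<Rightarrow> real"
  assumes kappa_pos: "0 < \<kappa>" and r0_pos: "0 < r0" and r0_less_R: "r0 < R"
    and alpha_nonneg: "0 \<le> \<alpha>" and eigenpair: "principal_radial_eigenpair \<kappa> r0 R \<alpha> L U"
begin

lemma U_continuous: "continuous_on {0..R} U"
  and U_nonneg: "r \<in> {0..R} \<Longrightarrow> 0 \<le> U r"
  and U_R: "U R = 0"
  and U_normalized: "2 * pi * integral {0..R} (\<lambda>r. r * (U r)\<^sup>2) = 1"
  and U_radial_eq: "r \<in> {0<..<R} - {r0} \<Longrightarrow> radial_eq \<kappa> r0 \<alpha> L 0 U r"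
  and U_deriv_at_left_r0: "(deriv U \<longlongrightarrow> lim_int (deriv U) r0) (at_left r0)"
  and U_deriv_at_right_r0: "(deriv U \<longlongrightarrow> lim_ext (deriv U) r0) (at_right r0)"
  and U_flux_jump: "(1 + \<alpha> * \<kappa>) * lim_int (deriv U) r0 = lim_ext (deriv U) r0"
  using eigenpair has_one_sided_limitsD r0_pos r0_less_R
  unfolding principal_radial_eigenpair_def by auto

lemma sigma_pos: "0 < sigma \<kappa> r0 \<alpha> r"
  using kappa_pos alpha_nonneg by (simp add: sigma_def add_pos_nonneg)

lemma U_bessel0_inner: "bessel0_ode_on ((L + \<kappa>) / (1 + \<alpha> * \<kappa>)) U {0<..<r0}"
  using U_radial_eq sigma_pos[of 0] r0_pos r0_less_R
  by (intro radial_eq_imp_bessel0) (auto simp: sigma_def mstar_def)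

lemma U_bessel0_outer: "bessel0_ode_on L U {r0<..<R}"
  using U_radial_eq r0_pos radial_eq_imp_bessel0[of "{r0<..<R}" \<kappa> r0 \<alpha> L U 1 0]
  by (auto simp: sigma_def mstar_def)

lemma U_tendsto_at_left_r0: "(U \<longlongrightarrow> U r0) (at_left r0)"
  and U_tendsto_at_right_r0: "(U \<longlongrightarrow> U r0) (at_right r0)"
  using continuous_on_interior[OF U_continuous, of r0] r0_pos r0_less_R
  by (auto simp: isCont_def filterlim_at_split)

lemma U_not_identically_zero: "\<not> ((\<forall>t\<in>{0<..<r0}. U t = 0) \<and> (\<forall>t\<in>{r0<..<R}. U t = 0))"
proof
  assume zero: "(\<forall>t\<in>{0<..<r0}. U t = 0) \<and> (\<forall>t\<in>{r0<..<R}. U t = 0)"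
  have "integral {0..R} (\<lambda>r. r * (U r)\<^sup>2) = integral {0..R} (\<lambda>r. 0)"
    by (rule integral_spike[of "{0, r0, R}"]) (use zero in auto)
  with U_normalized show False
    by simp
qed

lemma U_r0_pos: "0 < U r0"
proof (rule ccontr)
  assume "\<not> 0 < U r0"
  then have U_r0: "U r0 = 0"
    using U_nonneg[of r0] r0_pos r0_less_R by auto
  have "\<forall>\<^sub>F y in at_left r0. (U has_real_derivative deriv U y) (at y) \<and> U r0 \<le> U y"
    using eventually_at_left_real[OF r0_pos] by (rule eventually_mono)
      (use U_r0 r0_less_R in \<open>auto intro: U_nonneg bessel0_ode_onD(1)[OF U_bessel0_inner]\<close>)
  then have int: "lim_int (deriv U) r0 \<le> 0"
    by (rule deriv_limit_at_left_nonpos_if_local_min[OF U_deriv_at_left_r0 U_tendsto_at_left_r0])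
  have "\<forall>\<^sub>F y in at_right r0. (U has_real_derivative deriv U y) (at y) \<and> U r0 \<le> U y"
    using eventually_at_right_real[OF r0_less_R] by (rule eventually_mono)
      (use U_r0 r0_pos in \<open>auto intro: U_nonneg bessel0_ode_onD(1)[OF U_bessel0_outer]\<close>)
  then have ext: "0 \<le> lim_ext (deriv U) r0"
    by (rule deriv_limit_at_right_nonneg_if_local_min[OF U_deriv_at_right_r0 U_tendsto_at_right_r0])
  have "0 < 1 + \<alpha> * \<kappa>"
    using sigma_pos[of 0] r0_pos by (simp add: sigma_def)
  with int have "(1 + \<alpha> * \<kappa>) * lim_int (deriv U) r0 \<le> 0"
    by (simp add: mult_nonneg_nonpos)
  with ext U_flux_jump have ext0: "lim_ext (deriv U) r0 = 0"
    by linarith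
  with U_flux_jump \<open>0 < 1 + \<alpha> * \<kappa>\<close> have int0: "lim_int (deriv U) r0 = 0"
    by simp
  have "U t = 0" if "t \<in> {0<..<r0}" for t
    using bessel0_vanishes_at_right_end[OF U_bessel0_inner order_refl that]
      U_tendsto_at_left_r0 U_deriv_at_left_r0 U_r0 int0 by simp
  moreover have "U t = 0" if "t \<in> {r0<..<R}" for t
    using bessel0_vanishes_at_left_end[OF U_bessel0_outer r0_pos that]
      U_tendsto_at_right_r0 U_deriv_at_right_r0 U_r0 ext0 by simp
  ultimately show False
    using U_not_identically_zero by blast
qed

lemma U_not_zero_on_inner: "\<not> (\<forall>t\<in>{0<..<r0}. U t = 0)"
proof
  assume zero: "\<forall>t\<in>{0<..<r0}. U t = 0"
  have "\<forall>\<^sub>F t in at_left r0. U t = 0"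
    using eventually_at_left_real[OF r0_pos] by (rule eventually_mono) (use zero in auto)
  then have "U r0 = 0"
    using tendsto_unique[OF trivial_limit_at_left_real U_tendsto_at_left_r0 tendsto_eventually] by blast
  with U_r0_pos show False
    by simp
qed

lemma U_not_zero_on_outer: "\<not> (\<forall>t\<in>{r0<..<R}. U t = 0)"
proof
  assume zero: "\<forall>t\<in>{r0<..<R}. U t = 0"
  have "\<forall>\<^sub>F t in at_right r0. U t = 0"
    using eventually_at_right_real[OF r0_less_R] by (rule eventually_mono) (use zero in auto)
  then have "U r0 = 0"
    using tendsto_unique[OF trivial_limit_at_right_real U_tendsto_at_right_r0 tendsto_eventually] by blast
  with U_r0_pos show False
    by simp
qed

lemma U_pos: "t \<in> {0..<R} \<Longrightarrow> 0 < U t"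
proof (rule ccontr)
  assume t: "t \<in> {0..<R}" and "\<not> 0 < U t"
  then have "U t = 0"
    using U_nonneg[of t] by auto
  consider "t = 0" | "0 < t" "t < r0" | "t = r0" | "r0 < t"
    using t by fastforce
  then show False
  proof cases
    case 1
    have "continuous_on {0..<r0} U"
      using r0_less_R by (intro continuous_on_subset[OF U_continuous]) auto
    with \<open>U t = 0\<close> 1 have "U s = 0" if "s \<in> {0<..<r0}" for s
      using bessel0_vanishes_at_origin[OF U_bessel0_inner _ _ that] by simp
    with U_not_zero_on_inner show False
      by blast
  next
    case 2
    have "U s = 0" if "s \<in> {0<..<r0}" for s
      by (rule bessel0_nonneg_vanishes_if_zero[OF U_bessel0_inner order_refl _ _ _ that, of t])
        (use 2 \<open>U t = 0\<close> r0_less_R in \<open>auto intro: U_nonneg\<close>)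
    with U_not_zero_on_inner show False
      by blast
  next
    case 3
    with \<open>U t = 0\<close> U_r0_pos show False
      by simp
  next
    case 4
    have "U s = 0" if "s \<in> {r0<..<R}" for s
      by (rule bessel0_nonneg_vanishes_if_zero[OF U_bessel0_outer less_imp_le[OF r0_pos] _ _ _ that, of t])
        (use 4 t \<open>U t = 0\<close> r0_pos in \<open>auto intro: U_nonneg\<close>)
    with U_not_zero_on_outer show False
      by blast
  qed
qed

lemma z_problemD:
  assumes "z_problem \<kappa> r0 R \<alpha> L U n Z"
  shows "r \<in> {0<..<R} - {r0} \<Longrightarrow> radial_eq \<kappa> r0 \<alpha> L (real n ^ 2) Z r"
    and "(Z \<longlongrightarrow> lim_int Z r0) (at_left r0)" "(Z \<longlongrightarrow> lim_ext Z r0) (at_right r0)"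
    and "(deriv Z \<longlongrightarrow> lim_int (deriv Z) r0) (at_left r0)"
    and "(deriv Z \<longlongrightarrow> lim_ext (deriv Z) r0) (at_right r0)"
    and "lim_ext (deriv Z) r0 - (1 + \<alpha> * \<kappa>) * lim_int (deriv Z) r0 = - \<kappa> * U r0"
    and "lim_ext Z r0 - lim_int Z r0 = - (lim_ext (deriv U) r0 - lim_int (deriv U) r0)"
    and "Z 0 = 0" "(Z \<longlongrightarrow> 0) (at_right 0)" "Z R = 0" "(Z \<longlongrightarrow> 0) (at_left R)"
  using assms has_one_sided_limitsD r0_pos r0_less_R unfolding z_problem_def by auto

end

section \<open>Comparison of the transmission solutions\<close>

locale radial_transmission_comparison = radial_principal_eigenfunction +
  fixes j k :: nat and Zj Zk :: "real \<Rightarrow> real"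
  assumes j_le_k: "j \<le> k" and k_pos: "0 < k"
    and Zj_problem: "z_problem \<kappa> r0 R \<alpha> L U j Zj"
    and Zk_problem: "z_problem \<kappa> r0 R \<alpha> L U k Zk"
    and Zj_nonneg: "\<And>r. r \<in> {0<..<R} - {r0} \<Longrightarrow> 0 \<le> Zj r"
begin

text \<open>The jump conditions of Zj and Zk at r0 coincide, so their difference extends
  continuously across r0.\<close>
definition w :: "real \<Rightarrow> real" where
  "w t = (if t = r0 then lim_int Zj r0 - lim_int Zk r0 else Zj t - Zk t)"

lemma w_eq: "t \<noteq> r0 \<Longrightarrow> w t = Zj t - Zk t"
  by (simp add: w_def)

lemma w_r0: "w r0 = lim_int Zj r0 - lim_int Zk r0"
  by (simp add: w_def)

lemma w_0: "w 0 = 0" and w_R: "w R = 0"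
  using w_eq[of 0] w_eq[of R] r0_pos r0_less_R z_problemD(8,10)[OF Zj_problem]
    z_problemD(8,10)[OF Zk_problem] by auto

lemma eventually_w_eq_at_r0: "\<forall>\<^sub>F x in at r0 within S. Zj x - Zk x = w x"
  unfolding eventually_at_filter by (auto simp: w_eq intro: always_eventually)

lemma w_tendsto_at_left_r0: "(w \<longlongrightarrow> w r0) (at_left r0)"
proof -
  have "((\<lambda>x. Zj x - Zk x) \<longlongrightarrow> lim_int Zj r0 - lim_int Zk r0) (at_left r0)"
    by (intro tendsto_diff z_problemD(2)[OF Zj_problem] z_problemD(2)[OF Zk_problem])
  from Lim_transform_eventually[OF this eventually_w_eq_at_r0] show ?thesis
    unfolding w_r0 .
qed

lemma w_tendsto_at_right_r0: "(w \<longlongrightarrow> w r0) (at_right r0)"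
proof -
  have "((\<lambda>x. Zj x - Zk x) \<longlongrightarrow> lim_ext Zj r0 - lim_ext Zk r0) (at_right r0)"
    by (intro tendsto_diff z_problemD(3)[OF Zj_problem] z_problemD(3)[OF Zk_problem])
  moreover have "lim_ext Zj r0 - lim_ext Zk r0 = w r0"
    using z_problemD(7)[OF Zj_problem] z_problemD(7)[OF Zk_problem] by (simp add: w_r0)
  ultimately show ?thesis
    using Lim_transform_eventually[OF _ eventually_w_eq_at_r0] by simp
qed

lemma w_deriv:
  assumes "t \<in> {0<..<R} - {r0}"
  shows "(w has_real_derivative deriv Zj t - deriv Zk t) (at t)"
proof -
  have "radial_eq \<kappa> r0 \<alpha> L (real j ^ 2) Zj t" "radial_eq \<kappa> r0 \<alpha> L (real k ^ 2) Zk t"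
    using z_problemD(1)[OF Zj_problem assms] z_problemD(1)[OF Zk_problem assms] .
  then have "((\<lambda>x. Zj x - Zk x) has_real_derivative deriv Zj t - deriv Zk t) (at t)"
    unfolding radial_eq_def by (auto intro: derivative_intros)
  moreover have "\<forall>\<^sub>F x in nhds t. Zj x - Zk x = w x"
    using eventually_same_side[of t r0 \<kappa> \<alpha>] assms by (auto simp: w_eq elim!: eventually_mono)
  ultimately show ?thesis
    by (subst (asm) DERIV_cong_ev[OF refl _ refl]) auto
qed

lemma w_continuous: "continuous_on {0..R} w"
proof (rule continuous_on_IccI)
  have "\<forall>\<^sub>F x in at_right 0. Zj x - Zk x = w x"
    using eventually_at_right_real[OF r0_pos] by (rule eventually_mono) (auto simp: w_eq)
  then show "(w \<longlongrightarrow> w 0) (at_right 0)"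
    using tendsto_diff[OF z_problemD(9)[OF Zj_problem] z_problemD(9)[OF Zk_problem]]
      z_problemD(8)[OF Zj_problem] z_problemD(8)[OF Zk_problem] r0_pos
    by (auto simp: w_eq intro: Lim_transform_eventually)
  have "\<forall>\<^sub>F x in at_left R. Zj x - Zk x = w x"
    using eventually_at_left_real[OF r0_less_R] by (rule eventually_mono) (auto simp: w_eq)
  then show "(w \<longlongrightarrow> w R) (at_left R)"
    using tendsto_diff[OF z_problemD(11)[OF Zj_problem] z_problemD(11)[OF Zk_problem]]
      z_problemD(10)[OF Zj_problem] z_problemD(10)[OF Zk_problem] r0_less_R
    by (auto simp: w_eq intro: Lim_transform_eventually)
  fix t assume "0 < t" "t < R"
  then show "w \<midarrow>t\<rightarrow> w t"
    using w_tendsto_at_left_r0 w_tendsto_at_right_r0 DERIV_isCont[OF w_deriv, of t]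
    by (cases "t = r0") (auto simp: filterlim_at_split isCont_def)
qed (use r0_pos r0_less_R in auto)

text \<open>The Wronskian of U and w in flux form; the flux conditions of Zj, Zk and U at r0
  make it continuous there.\<close>
definition wronskian :: "real \<Rightarrow> real" where
  "wronskian t = (if t = r0
     then r0 * (1 + \<alpha> * \<kappa>) * (U r0 * (lim_int (deriv Zj) r0 - lim_int (deriv Zk) r0)
            - w r0 * lim_int (deriv U) r0)
     else t * sigma \<kappa> r0 \<alpha> t * (U t * (deriv Zj t - deriv Zk t) - w t * deriv U t))"

lemma wronskian_deriv:
  assumes t: "t \<in> {0<..<R} - {r0}"
  shows "(wronskian has_real_derivative U t * (real j ^ 2 * Zj t - real k ^ 2 * Zk t) / t) (at t)"
proof -
  define \<sigma> where "\<sigma> = sigma \<kappa> r0 \<alpha> t"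
  define \<mu> where "\<mu> = L + mstar \<kappa> r0 t"
  have "0 < t" using t by simp
  have radU: "radial_eq \<kappa> r0 \<alpha> L 0 U t"
    and radj: "radial_eq \<kappa> r0 \<alpha> L (real j ^ 2) Zj t"
    and radk: "radial_eq \<kappa> r0 \<alpha> L (real k ^ 2) Zk t"
    using U_radial_eq[OF t] z_problemD(1)[OF Zj_problem t] z_problemD(1)[OF Zk_problem t] .
  note fluxU = radial_eq_flux_form[OF radU \<open>0 < t\<close>, folded \<sigma>_def \<mu>_def]
  note fluxj = radial_eq_flux_form[OF radj \<open>0 < t\<close>, folded \<sigma>_def \<mu>_def]
  note fluxk = radial_eq_flux_form[OF radk \<open>0 < t\<close>, folded \<sigma>_def \<mu>_def]
  define g where "g x = x * \<sigma> * (U x * (deriv Zj x - deriv Zk x) - (Zj x - Zk x) * deriv U x)" for x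
  have "(g has_real_derivative
      \<sigma> * (U t * (deriv Zj t - deriv Zk t) - (Zj t - Zk t) * deriv U t)
      + t * \<sigma> * (U t * (deriv (deriv Zj) t - deriv (deriv Zk) t) - (Zj t - Zk t) * deriv (deriv U) t)) (at t)"
    using radU radj radk unfolding g_def radial_eq_def
    by (auto intro!: derivative_eq_intros simp: algebra_simps)
  also have "\<sigma> * (U t * (deriv Zj t - deriv Zk t) - (Zj t - Zk t) * deriv U t)
      + t * \<sigma> * (U t * (deriv (deriv Zj) t - deriv (deriv Zk) t) - (Zj t - Zk t) * deriv (deriv U) t)
    = U t * (\<sigma> * (t * deriv (deriv Zj) t + deriv Zj t)) - U t * (\<sigma> * (t * deriv (deriv Zk) t + deriv Zk t))
      - (Zj t - Zk t) * (\<sigma> * (t * deriv (deriv U) t + deriv U t))"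
    by (simp add: algebra_simps)
  also have "\<dots> = U t * (real j ^ 2 * Zj t - real k ^ 2 * Zk t) / t"
    unfolding fluxU fluxj fluxk using \<open>0 < t\<close> by (simp add: field_simps)
  finally have "(g has_real_derivative U t * (real j ^ 2 * Zj t - real k ^ 2 * Zk t) / t) (at t)" .
  moreover have "\<forall>\<^sub>F x in nhds t. g x = wronskian x"
    using eventually_same_side[of t r0 \<kappa> \<alpha>] t
    by (auto simp: g_def wronskian_def w_eq \<sigma>_def elim!: eventually_mono)
  ultimately show ?thesis
    by (subst (asm) DERIV_cong_ev[OF refl _ refl]) auto
qed

lemma wronskian_tendsto_at_left_r0: "(wronskian \<longlongrightarrow> wronskian r0) (at_left r0)"
proof -
  have "((\<lambda>x. x * (1 + \<alpha> * \<kappa>) * (U x * (deriv Zj x - deriv Zk x) - w x * deriv U x))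
      \<longlongrightarrow> wronskian r0) (at_left r0)"
    unfolding wronskian_def if_P[OF refl]
    by (intro tendsto_intros U_tendsto_at_left_r0 w_tendsto_at_left_r0 U_deriv_at_left_r0
        z_problemD(4)[OF Zj_problem] z_problemD(4)[OF Zk_problem])
  moreover have "\<forall>\<^sub>F x in at_left r0.
      x * (1 + \<alpha> * \<kappa>) * (U x * (deriv Zj x - deriv Zk x) - w x * deriv U x) = wronskian x"
    using eventually_at_left_real[OF r0_pos] by (rule eventually_mono) (auto simp: wronskian_def sigma_def)
  ultimately show ?thesis
    by (rule Lim_transform_eventually)
qed

lemma wronskian_tendsto_at_right_r0: "(wronskian \<longlongrightarrow> wronskian r0) (at_right r0)"
proof -
  have jump: "lim_ext (deriv Zj) r0 - lim_ext (deriv Zk) r0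
      = (1 + \<alpha> * \<kappa>) * (lim_int (deriv Zj) r0 - lim_int (deriv Zk) r0)"
    using z_problemD(6)[OF Zj_problem] z_problemD(6)[OF Zk_problem] by (simp add: algebra_simps)
  have "wronskian r0 = r0 * (U r0 * (lim_ext (deriv Zj) r0 - lim_ext (deriv Zk) r0)
      - w r0 * lim_ext (deriv U) r0)"
    unfolding jump U_flux_jump[symmetric] by (simp add: wronskian_def algebra_simps)
  then have "((\<lambda>x. x * (U x * (deriv Zj x - deriv Zk x) - w x * deriv U x))
      \<longlongrightarrow> wronskian r0) (at_right r0)"
    by (simp only:) (intro tendsto_intros U_tendsto_at_right_r0 w_tendsto_at_right_r0
        U_deriv_at_right_r0 z_problemD(5)[OF Zj_problem] z_problemD(5)[OF Zk_problem])
  moreover have "\<forall>\<^sub>F x in at_right r0.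
      x * (U x * (deriv Zj x - deriv Zk x) - w x * deriv U x) = wronskian x"
    using eventually_at_right_real[OF r0_less_R] by (rule eventually_mono) (auto simp: wronskian_def sigma_def)
  ultimately show ?thesis
    by (rule Lim_transform_eventually)
qed

lemma wronskian_isCont: "t \<in> {0<..<R} \<Longrightarrow> isCont wronskian t"
  using wronskian_tendsto_at_left_r0 wronskian_tendsto_at_right_r0 DERIV_isCont[OF wronskian_deriv, of t]
  by (cases "t = r0") (auto simp: isCont_def filterlim_at_split)

lemma wronskian_tendsto_at_left_R: "(wronskian \<longlongrightarrow> 0) (at_left R)"
proof -
  have U_lim: "(U \<longlongrightarrow> 0) (at_left R)"
    using continuous_on_Icc_at_leftD[OF U_continuous] U_R r0_pos r0_less_R by simp
  have w_lim: "(w \<longlongrightarrow> 0) (at_left R)"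
    using continuous_on_Icc_at_leftD[OF w_continuous] w_R r0_pos r0_less_R by simp
  have rad: "radial_eq \<kappa> r0 \<alpha> L 0 U r" "radial_eq \<kappa> r0 \<alpha> L (real j ^ 2) Zj r"
      "radial_eq \<kappa> r0 \<alpha> L (real k ^ 2) Zk r" if "r0 < r" "r < R" for r
    using that r0_pos U_radial_eq z_problemD(1)[OF Zj_problem] z_problemD(1)[OF Zk_problem] by auto
  obtain BU Bj Bk where
      "\<forall>\<^sub>F r in at_left R. \<bar>deriv U r\<bar> \<le> BU"
      "\<forall>\<^sub>F r in at_left R. \<bar>deriv Zj r\<bar> \<le> Bj"
      "\<forall>\<^sub>F r in at_left R. \<bar>deriv Zk r\<bar> \<le> Bk"
    using radial_eq_deriv_bounded_at_left[OF _ r0_less_R rad(1) U_lim]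
      radial_eq_deriv_bounded_at_left[OF _ r0_less_R rad(2) z_problemD(11)[OF Zj_problem]]
      radial_eq_deriv_bounded_at_left[OF _ r0_less_R rad(3) z_problemD(11)[OF Zk_problem]]
      r0_pos by auto
  moreover note eventually_at_left_real[OF r0_less_R]
  ultimately have "\<forall>\<^sub>F r in at_left R.
      norm (wronskian r) \<le> R * (\<bar>U r\<bar> * (Bj + Bk) + \<bar>w r\<bar> * BU)"
  proof eventually_elim
    case (elim r)
    then have "norm (wronskian r) = r * \<bar>U r * (deriv Zj r - deriv Zk r) - w r * deriv U r\<bar>"
      using r0_pos by (auto simp: wronskian_def sigma_def abs_mult)
    also have "\<dots> \<le> R * (\<bar>U r\<bar> * (Bj + Bk) + \<bar>w r\<bar> * BU)"
    proof (rule mult_mono)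
      have "\<bar>deriv Zj r - deriv Zk r\<bar> \<le> Bj + Bk"
        using elim abs_triangle_ineq4[of "deriv Zj r" "deriv Zk r"] by linarith
      with elim show "\<bar>U r * (deriv Zj r - deriv Zk r) - w r * deriv U r\<bar> \<le> \<bar>U r\<bar> * (Bj + Bk) + \<bar>w r\<bar> * BU"
        by (intro order.trans[OF abs_triangle_ineq4] add_mono) (auto simp: abs_mult intro: mult_left_mono)
    qed (use elim r0_pos in auto)
    finally show ?case .
  qed
  moreover have "((\<lambda>r. R * (\<bar>U r\<bar> * (Bj + Bk) + \<bar>w r\<bar> * BU)) \<longlongrightarrow> R * (\<bar>0\<bar> * (Bj + Bk) + \<bar>0\<bar> * BU)) (at_left R)"
    by (intro tendsto_intros U_lim w_lim)
  ultimately show ?thesis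
    by (auto intro: Lim_null_comparison)
qed

lemma wronskian_decreasing:
  assumes "0 < x" "x < y" "y < R" and neg: "\<And>t. x < t \<Longrightarrow> t < y \<Longrightarrow> w t < 0"
  shows "wronskian y < wronskian x"
proof -
  have deriv_neg: "(wronskian has_real_derivative U t * (real j ^ 2 * Zj t - real k ^ 2 * Zk t) / t) (at t)
      \<and> U t * (real j ^ 2 * Zj t - real k ^ 2 * Zk t) / t < 0"
    if "x < t" "t < y" "t \<noteq> r0" for t
  proof
    from that assms have t: "t \<in> {0<..<R} - {r0}" and "w t < 0"
      by auto
    show "(wronskian has_real_derivative U t * (real j ^ 2 * Zj t - real k ^ 2 * Zk t) / t) (at t)"
      by (rule wronskian_deriv[OF t])
    have "real j ^ 2 * Zj t \<le> real k ^ 2 * Zj t"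
      using Zj_nonneg[OF t] j_le_k by (intro mult_right_mono power_mono) auto
    also have "\<dots> < real k ^ 2 * Zk t"
      using \<open>w t < 0\<close> w_eq[of t] t k_pos by (intro mult_strict_left_mono) auto
    finally have "real j ^ 2 * Zj t - real k ^ 2 * Zk t < 0"
      by simp
    moreover have "0 < U t" "0 < t"
      using U_pos[of t] t by auto
    ultimately show "U t * (real j ^ 2 * Zj t - real k ^ 2 * Zk t) / t < 0"
      by (simp add: mult_pos_neg divide_neg_pos)
  qed
  have "continuous_on {x..y} wronskian"
    using assms by (intro continuous_at_imp_continuous_on ballI wronskian_isCont) auto
  from DERIV_neg_imp_decreasing_open_except[OF \<open>x < y\<close> this deriv_neg] show ?thesis .
qed

definition ratio :: "real \<Rightarrow> real" where
  "ratio t = w t / U t"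

lemma ratio_deriv:
  assumes t: "t \<in> {0<..<R} - {r0}"
  shows "(ratio has_real_derivative wronskian t / (t * sigma \<kappa> r0 \<alpha> t * (U t)\<^sup>2)) (at t)"
proof -
  have "(U has_real_derivative deriv U t) (at t)"
    using U_radial_eq[OF t] unfolding radial_eq_def by blast
  moreover have "0 < U t" "0 < t"
    using U_pos[of t] t by auto
  ultimately show ?thesis
    using w_deriv[OF t] sigma_pos[of t] t unfolding ratio_def[abs_def]
    by (auto intro!: derivative_eq_intros simp: wronskian_def w_eq field_simps power2_eq_square)
qed

lemma ratio_continuous: "continuous_on {0..<R} ratio"
  unfolding ratio_def[abs_def]
  by (intro continuous_on_divide continuous_on_subset[OF w_continuous]
      continuous_on_subset[OF U_continuous]) (auto dest: U_pos)

lemma ratio_strict_mono: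
  assumes "0 \<le> x" "x < y" "y < R" and pos: "\<And>t. x < t \<Longrightarrow> t < y \<Longrightarrow> t \<noteq> r0 \<Longrightarrow> 0 < wronskian t"
  shows "ratio x < ratio y"
proof (rule DERIV_pos_imp_increasing_open_except[OF \<open>x < y\<close>])
  show "continuous_on {x..y} ratio"
    using assms by (intro continuous_on_subset[OF ratio_continuous]) auto
  fix t assume "x < t" "t < y" "t \<noteq> r0"
  with assms U_pos[of t] sigma_pos[of t] ratio_deriv[of t]
  show "(ratio has_real_derivative wronskian t / (t * sigma \<kappa> r0 \<alpha> t * (U t)\<^sup>2)) (at t)
      \<and> 0 < wronskian t / (t * sigma \<kappa> r0 \<alpha> t * (U t)\<^sup>2)"
    by auto
qed

lemma ratio_strict_antimono:
  assumes "0 \<le> x" "x < y" "y < R" and neg: "\<And>t. x < t \<Longrightarrow> t < y \<Longrightarrow> t \<noteq> r0 \<Longrightarrow> wronskian t < 0"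
  shows "ratio y < ratio x"
proof (rule DERIV_neg_imp_decreasing_open_except[OF \<open>x < y\<close>])
  show "continuous_on {x..y} ratio"
    using assms by (intro continuous_on_subset[OF ratio_continuous]) auto
  fix t assume "x < t" "t < y" "t \<noteq> r0"
  with assms U_pos[of t] sigma_pos[of t] ratio_deriv[of t]
  show "(ratio has_real_derivative wronskian t / (t * sigma \<kappa> r0 \<alpha> t * (U t)\<^sup>2)) (at t)
      \<and> wronskian t / (t * sigma \<kappa> r0 \<alpha> t * (U t)\<^sup>2) < 0"
    by (auto simp: divide_neg_pos)
qed

lemma ratio_nonneg_iff: "t \<in> {0..<R} \<Longrightarrow> 0 \<le> ratio t \<longleftrightarrow> 0 \<le> w t"
  using U_pos[of t] by (simp add: ratio_def zero_le_divide_iff)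

lemma wronskian_pos_if_w_neg_near_R:
  assumes "0 < r1" "r1 < R" and neg: "\<And>t. r1 \<le> t \<Longrightarrow> t < R \<Longrightarrow> w t < 0"
  shows "0 < wronskian r1"
proof -
  define s where "s = (r1 + R) / 2"
  have s: "r1 < s" "s < R"
    using assms by (auto simp: s_def)
  have "wronskian t \<le> wronskian s" if "t \<in> {s<..<R}" for t
    using that s assms neg by (intro less_imp_le wronskian_decreasing) auto
  with eventually_at_left_real[OF \<open>s < R\<close>]
  have "\<forall>\<^sub>F t in at_left R. wronskian t \<le> wronskian s"
    by (auto elim: eventually_mono)
  then have "0 \<le> wronskian s"
    using tendsto_le[OF trivial_limit_at_left_real tendsto_const wronskian_tendsto_at_left_R] by blast
  also have "wronskian s < wronskian r1"
    using s assms neg by (intro wronskian_decreasing) auto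
  finally show ?thesis .
qed

lemma wronskian_pos_if_w_neg_up_to:
  assumes r1: "0 < r1" "r1 < b" "b \<le> R"
    and neg: "\<And>t. r1 \<le> t \<Longrightarrow> t < b \<Longrightarrow> w t < 0" and "0 \<le> w b"
  shows "0 < wronskian r1"
proof (rule ccontr)
  assume "\<not> 0 < wronskian r1"
  then have "b \<noteq> R"
    using wronskian_pos_if_w_neg_near_R[of r1] r1 neg by auto
  with r1 have "b < R"
    by simp
  have "wronskian t < 0" if "r1 < t" "t < b" for t
  proof -
    have "wronskian t < wronskian r1"
      using that r1 \<open>b < R\<close> neg by (intro wronskian_decreasing) auto
    with \<open>\<not> 0 < wronskian r1\<close> show ?thesis
      by simp
  qed
  then have "ratio b < ratio r1"
    using r1 \<open>b < R\<close> by (intro ratio_strict_antimono) auto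
  moreover have "ratio r1 < 0" "0 \<le> ratio b"
    using ratio_nonneg_iff[of r1] ratio_nonneg_iff[of b] neg[of r1] \<open>0 \<le> w b\<close> r1 \<open>b < R\<close> by auto
  ultimately show False
    by simp
qed

lemma w_nonneg:
  assumes t: "t \<in> {0<..<R}"
  shows "0 \<le> w t"
proof (rule ccontr)
  assume "\<not> 0 \<le> w t"
  then have "w t < 0" by simp
  have "continuous_on {t..R} w" "continuous_on {0..t} w"
    using t by (auto intro: continuous_on_subset[OF w_continuous])
  obtain b where b: "t < b" "b \<le> R" "0 \<le> w b" and neg_after: "\<And>s. t \<le> s \<Longrightarrow> s < b \<Longrightarrow> w s < 0"
    by (rule continuous_on_Icc_first_nonneg[OF _ \<open>continuous_on {t..R} w\<close> \<open>w t < 0\<close>])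
      (use t w_R in auto)
  have "0 < wronskian t"
    using t b neg_after by (intro wronskian_pos_if_w_neg_up_to) auto
  obtain a where a: "0 \<le> a" "a < t" "0 \<le> w a" and neg_before: "\<And>s. a < s \<Longrightarrow> s \<le> t \<Longrightarrow> w s < 0"
    by (rule continuous_on_Icc_last_nonneg[OF _ \<open>continuous_on {0..t} w\<close> _ \<open>w t < 0\<close>])
      (use t w_0 in auto)
  have "0 < wronskian s" if "a < s" "s < t" for s
  proof -
    have "wronskian t < wronskian s"
      using that a t neg_before by (intro wronskian_decreasing) auto
    with \<open>0 < wronskian t\<close> show ?thesis
      by simp
  qed
  then have "ratio a < ratio t"
    using a t by (intro ratio_strict_mono) auto
  moreover have "0 \<le> ratio a" "ratio t < 0"
    using ratio_nonneg_iff[of a] ratio_nonneg_iff[of t] a t \<open>w t < 0\<close> by auto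
  ultimately show False
    by simp
qed

lemma Zk_le_Zj: "r \<in> {0<..<R} - {r0} \<Longrightarrow> Zk r \<le> Zj r"
  using w_nonneg[of r] w_eq[of r] by auto

lemma omega_Zj_le_omega_Zk: "omega \<kappa> r0 U Zj \<le> omega \<kappa> r0 U Zk"
proof -
  have "lim_int Zk r0 \<le> lim_int Zj r0"
    using w_nonneg[of r0] r0_pos r0_less_R by (simp add: w_r0)
  moreover have "0 \<le> r0 * \<kappa> * U r0 / 2"
    using r0_pos kappa_pos U_r0_pos by simp
  ultimately show ?thesis
    unfolding omega_def by (intro mult_left_mono) auto
qed

end

theorem lemma6p6:
  fixes \<kappa> m0 r0 R \<alpha>bar :: real
    and lam :: "real \<Rightarrow> real"
    and u :: "real \<Rightarrow> real \<Rightarrow> real"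
    and z :: "nat \<Rightarrow> real \<Rightarrow> real \<Rightarrow> real"
  assumes "0 < m0" and "m0 < \<kappa>" and "0 < r0" and "r0 < R"
    and "\<kappa> * (pi * r0\<^sup>2) = m0 * (pi * R\<^sup>2)"
    and "\<alpha>bar > 0"
    and "\<forall>\<alpha> \<in> {0..\<alpha>bar}. principal_radial_eigenpair \<kappa> r0 R \<alpha> (lam \<alpha>) (u \<alpha>)"
    and "\<forall>\<alpha> \<in> {0..\<alpha>bar}. \<forall>k::nat. k \<ge> 1 \<longrightarrow>
           z_problem \<kappa> r0 R \<alpha> (lam \<alpha>) (u \<alpha>) k (z k \<alpha>)"
    and "\<forall>\<alpha> \<in> {0..\<alpha>bar}. \<forall>r \<in> {0<..<R} - {r0}. 0 \<le> z 1 \<alpha> r"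
  shows "\<forall>\<alpha> \<in> {0..\<alpha>bar}. \<forall>k::nat. k \<ge> 1 \<longrightarrow>
           (\<forall>r \<in> {0<..<R} - {r0}. z k \<alpha> r \<le> z 1 \<alpha> r) \<and>
           omega \<kappa> r0 (u \<alpha>) (z k \<alpha>) \<ge> omega \<kappa> r0 (u \<alpha>) (z 1 \<alpha>)"
proof (intro ballI allI impI)
  fix \<alpha> :: real and k :: nat
  assume \<alpha>: "\<alpha> \<in> {0..\<alpha>bar}" and "k \<ge> 1"
  interpret radial_transmission_comparison \<kappa> r0 R \<alpha> "lam \<alpha>" "u \<alpha>" 1 k "z 1 \<alpha>" "z k \<alpha>"
    using assms \<alpha> \<open>k \<ge> 1\<close> by unfold_locales auto
  show "(\<forall>r \<in> {0<..<R} - {r0}. z k \<alpha> r \<le> z 1 \<alpha> r) \<and>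
      omega \<kappa> r0 (u \<alpha>) (z k \<alpha>) \<ge> omega \<kappa> r0 (u \<alpha>) (z 1 \<alpha>)"
    using Zk_le_Zj omega_Zj_le_omega_Zk by auto
qed

end
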